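(* Let $W=\mathfrak{S}_n$, $\ast=\mathrm{id}$, $w\in I_\ast$, and let $(s_{i_1},\dots,s_{i_k},w)$ be a reduced sequence. (1) If $k\ge2$ and $|i_{k-1}-i_k|>1$, then $(s_{i_1},\dots,s_{i_{k-2}},s_{i_k},s_{i_{k-1}},w)$ is a reduced sequence and $s_{i_1}\ltimes\cdots\ltimes s_{i_{k-1}}\ltimes s_{i_k}\ltimes w=s_{i_1}\ltimes\cdots\ltimes s_{i_{k-2}}\ltimes s_{i_k}\ltimes s_{i_{k-1}}\ltimes w$. (2) If $k\ge3$ and $i_{k-2}=i_k=i_{k-1}\pm1$, then $(s_{i_1},\dots,s_{i_{k-3}},s_{i_{k-1}},s_{i_k},s_{i_{k-1}},w)$ is a reduced sequence and $s_{i_1}\ltimes\cdots\ltimes s_{i_{k-3}}\ltimes s_{i_{k-2}}\ltimes s_{i_{k-1}}\ltimes s_{i_k}\ltimes w=s_{i_1}\ltimes\cdots\ltimes s_{i_{k-3}}\ltimes s_{i_{k-1}}\ltimes s_{i_k}\ltimes s_{i_{k-1}}\ltimes w$. (3) If $w=s_{i_k\pm1}$, then $(s_{i_1},\dots,s_{i_{k-1}},s_{i_k\pm1},s_{i_k})$ is a reduced sequence and $s_{i_1}\ltimes\cdots\ltimes s_{i_{k-1}}\ltimes s_{i_k}\ltimes s_{i_k\pm1}=s_{i_1}\ltimes\cdots\ltimes s_{i_{k-1}}\ltimes s_{i_k\pm1}\ltimes s_{i_k}$.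
   Context: $\mathfrak{S}_n$ with $s_i=(i,i+1)$, $S=\{s_1,\dots,s_{n-1}\}$; $I_\ast=\{w\in\mathfrak{S}_n:w^2=1\}$. For $s\in S$, $w\in I_\ast$: $s\ltimes w=sw$ if $sw=ws$, $s\ltimes w=sws$ otherwise (so $s\ltimes1=s$); iterated from the right: $s_{i_1}\ltimes\cdots\ltimes s_{i_k}\ltimes w=s_{i_1}\ltimes(\cdots(s_{i_k}\ltimes w)\cdots)$, and an expression ending in $s_{i_k}$ means ending in $s_{i_k}\ltimes1$. $\rho(w)$ is the minimal $k$ such that $w=s_{i_1}\ltimes\cdots\ltimes s_{i_k}\ltimes1$ for some $s_{i_j}\in S$. A sequence $(s_{i_1},\dots,s_{i_k},w)$ with $w\in I_\ast$ is reduced if $\rho(s_{i_1}\ltimes\cdots\ltimes s_{i_k}\ltimes w)=\rho(w)+k$. *)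

theory Defs
  imports "HOL-Combinatorics.Combinatorics"
begin

text \<open>The symmetric group on {1..n}: permutations are functions nat => nat permuting {1..n};
  the product sw is composition s o w.\<close>

definition Sym :: "nat \<Rightarrow> (nat \<Rightarrow> nat) set" where
  "Sym n = {w. w permutes {1..n}}"

definition Invol :: "nat \<Rightarrow> (nat \<Rightarrow> nat) set" where
  "Invol n = {w \<in> Sym n. w \<circ> w = id}"

definition sgen :: "nat \<Rightarrow> nat \<Rightarrow> nat" where
  "sgen i = transpose i (Suc i)"

definition gens :: "nat \<Rightarrow> nat set" where
  "gens n = {1..<n}"

definition tact :: "nat \<Rightarrow> (nat \<Rightarrow> nat) \<Rightarrow> (nat \<Rightarrow> nat)" where
  "tact i w = (if sgen i \<circ> w = w \<circ> sgen i then sgen i \<circ> w else sgen i \<circ> w \<circ> sgen i)"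

definition tacts :: "nat list \<Rightarrow> (nat \<Rightarrow> nat) \<Rightarrow> (nat \<Rightarrow> nat)" where
  "tacts is w = foldr tact is w"

definition rho :: "nat \<Rightarrow> (nat \<Rightarrow> nat) \<Rightarrow> nat" where
  "rho n w = (LEAST k. \<exists>is. length is = k \<and> set is \<subseteq> gens n \<and> tacts is id = w)"

definition reduced :: "nat \<Rightarrow> nat list \<Rightarrow> (nat \<Rightarrow> nat) \<Rightarrow> bool" where
  "reduced n is w \<longleftrightarrow> w \<in> Invol n \<and> set is \<subseteq> gens n \<and>
     rho n (tacts is w) = rho n w + length is"

end

theory Submission
  imports Defs
begin

text \<open>For an involution \<open>x\<close> of \<open>{1..n}\<close> let \<open>N(x)\<close> be the number of inversions plus the number of
  excedances \<open>p < x p\<close>. A step \<open>x \<mapsto> s\<^sub>i \<ltimes> x\<close> raises \<open>N\<close> by two at an ascent \<open>x i < x (i+1)\<close>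
  and lowers it by two at a descent; since every involution other than \<open>1\<close> has a descent,
  \<open>\<rho> = N / 2\<close>. Hence a sequence is reduced iff every step is an ascent. Far commutation
  \<open>s\<^sub>a \<ltimes> s\<^sub>b \<ltimes> w = s\<^sub>b \<ltimes> s\<^sub>a \<ltimes> w\<close> holds for every \<open>w\<close>; the braid relation holds when the three
  steps of \<open>s\<^sub>a \<ltimes> s\<^sub>b \<ltimes> s\<^sub>a \<ltimes> w\<close> are ascents, which is checked by a case analysis of the values of
  \<open>w\<close> at the three points moved by \<open>s\<^sub>a, s\<^sub>b\<close>. In each part \<open>\<rho>\<close> of the two sides agrees, so
  reducedness transfers.\<close>

lemma sgen_apply: "sgen i p = (if p = i then Suc i else if p = Suc i then i else p)"
  by (simp add: sgen_def transpose_def)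

lemma sgen_sgen [simp]: "sgen i (sgen i p) = p"
  by (simp add: sgen_apply)

lemma sgen_comp_sgen [simp]: "sgen i \<circ> sgen i = id"
  by (rule ext) simp

lemma inj_sgen: "inj_on (sgen i) A"
  by (rule inj_onI) (metis sgen_sgen)

lemma mem_sgen_image_iff: "p \<in> sgen i ` A \<longleftrightarrow> sgen i p \<in> A"
  by (auto intro: image_eqI[where x = "sgen i p"])

lemma sgen_less_sgen_iff:
  "p \<noteq> q \<Longrightarrow> sgen i p < sgen i q \<longleftrightarrow> (p < q \<and> \<not> (p = i \<and> q = Suc i)) \<or> (p = Suc i \<and> q = i)"
  by (auto simp: sgen_apply)

lemma sgen_in_box_iff: "i \<in> gens n \<Longrightarrow> sgen i p \<in> {1..n} \<longleftrightarrow> p \<in> {1..n}"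
  by (auto simp: sgen_apply gens_def)

lemma sgen_permutes: "i \<in> gens n \<Longrightarrow> sgen i permutes {1..n}"
  unfolding sgen_def gens_def by (rule permutes_swap_id) auto

lemma sgen_commute: "a > b + 1 \<or> b > a + 1 \<Longrightarrow> sgen a \<circ> sgen b = sgen b \<circ> sgen a"
  by (auto simp: fun_eq_iff sgen_apply)

lemma sgen_braid: "b = Suc a \<or> a = Suc b \<Longrightarrow> sgen a \<circ> sgen b \<circ> sgen a = sgen b \<circ> sgen a \<circ> sgen b"
  by (rule ext) (auto simp: sgen_apply)

lemma sgen_cancel_left: "sgen i \<circ> f = sgen i \<circ> g \<longleftrightarrow> f = g"
  by (metis comp_assoc id_comp sgen_comp_sgen)

lemma sgen_cancel_right: "f \<circ> sgen i = g \<circ> sgen i \<longleftrightarrow> f = g"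
  by (metis comp_assoc comp_id sgen_comp_sgen)

definition twist :: "nat \<Rightarrow> (nat \<Rightarrow> nat) \<Rightarrow> nat \<Rightarrow> nat" where
  "twist i x = (if sgen i \<circ> x = x \<circ> sgen i then id else sgen i)"

lemma tact_eq_comp_twist: "tact i x = sgen i \<circ> x \<circ> twist i x"
  by (simp add: tact_def twist_def)

lemma tact_id: "tact i id = sgen i"
  by (simp add: tact_def)

lemma tact_tact [simp]: "tact i (tact i x) = x"
proof (cases "sgen i \<circ> x = x \<circ> sgen i")
  case True
  then have "sgen i \<circ> (sgen i \<circ> x) = (sgen i \<circ> x) \<circ> sgen i"
    by (metis comp_assoc)
  with True have "tact i (tact i x) = (sgen i \<circ> sgen i) \<circ> x"
    by (simp add: tact_def comp_assoc)
  then show ?thesis by simp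
next
  case False
  then have "\<not> sgen i \<circ> (sgen i \<circ> x \<circ> sgen i) = (sgen i \<circ> x \<circ> sgen i) \<circ> sgen i"
    by (metis comp_assoc comp_id id_comp sgen_comp_sgen)
  with False have "tact i (tact i x) = sgen i \<circ> (sgen i \<circ> x \<circ> sgen i) \<circ> sgen i"
    unfolding tact_def by (simp only: if_False)
  also have "\<dots> = (sgen i \<circ> sgen i) \<circ> x \<circ> (sgen i \<circ> sgen i)"
    by (simp only: comp_assoc)
  finally show ?thesis by simp
qed

lemma twist_cancel_right: "f \<circ> twist i x = g \<circ> twist i x \<longleftrightarrow> f = g"
  by (simp add: twist_def sgen_cancel_right)

lemma sgen_commute_tact_iff:
  assumes "sgen a \<circ> sgen b = sgen b \<circ> sgen a"
  shows "sgen a \<circ> tact b w = tact b w \<circ> sgen a \<longleftrightarrow> sgen a \<circ> w = w \<circ> sgen a"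
proof -
  have "twist b w \<circ> sgen a = sgen a \<circ> twist b w"
    using assms by (simp add: twist_def)
  then have "sgen a \<circ> tact b w = sgen b \<circ> (sgen a \<circ> w) \<circ> twist b w"
    and "tact b w \<circ> sgen a = sgen b \<circ> (w \<circ> sgen a) \<circ> twist b w"
    unfolding tact_eq_comp_twist by (metis assms comp_assoc)+
  then show ?thesis by (simp only: twist_cancel_right sgen_cancel_left)
qed

lemma tact_commute:
  assumes "a > b + 1 \<or> b > a + 1"
  shows "tact a (tact b w) = tact b (tact a w)"
proof -
  have ab: "sgen a \<circ> sgen b = sgen b \<circ> sgen a" by (rule sgen_commute[OF assms])
  then have ba: "sgen b \<circ> sgen a = sgen a \<circ> sgen b" by simp
  have "twist a (tact b w) = twist a w" "twist b (tact a w) = twist b w"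
    unfolding twist_def sgen_commute_tact_iff[OF ab] sgen_commute_tact_iff[OF ba] by simp_all
  moreover have "twist a w \<circ> twist b w = twist b w \<circ> twist a w"
    using ab by (simp add: twist_def)
  ultimately show ?thesis
    unfolding tact_eq_comp_twist by (metis ab comp_assoc)
qed

lemma tact_sgen_adjacent:
  assumes "j = Suc a \<or> a = Suc j"
  shows "tact a (sgen j) = sgen a \<circ> sgen j \<circ> sgen a"
proof -
  have "sgen a (sgen j a) \<noteq> sgen j (sgen a a)"
    using assms by (auto simp: sgen_apply)
  then have "sgen a \<circ> sgen j \<noteq> sgen j \<circ> sgen a"
    by (metis comp_apply)
  then show ?thesis by (simp add: tact_def)
qed

lemma InvolD:
  assumes "x \<in> Invol n"
  shows "x permutes {1..n}" and "x (x p) = p" and "inj_on x {1..n}"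
    and "p \<in> {1..n} \<Longrightarrow> x p \<in> {1..n}"
proof -
  show xp: "x permutes {1..n}" using assms by (simp add: Invol_def Sym_def)
  show "x (x p) = p" using assms by (simp add: Invol_def pointfree_idE)
  show "inj_on x {1..n}" using xp permutes_inj_on by blast
  show "p \<in> {1..n} \<Longrightarrow> x p \<in> {1..n}" by (rule permutes_in_image[OF xp, THEN iffD2])
qed

lemma id_in_Invol: "id \<in> Invol n"
  by (simp add: Invol_def Sym_def permutes_id)

lemma twist_involution:
  assumes "\<And>p. x (x p) = p"
  shows "twist i x = (if (x i = i \<and> x (Suc i) = Suc i) \<or> x i = Suc i then id else sgen i)"
proof -
  have inj: "inj x" by (metis assms injI)
  have "sgen i \<circ> x = x \<circ> sgen i \<longleftrightarrow> (x i = i \<and> x (Suc i) = Suc i) \<or> x i = Suc i"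
  proof
    assume "sgen i \<circ> x = x \<circ> sgen i"
    then have "sgen i (x i) = x (Suc i)" by (metis comp_apply sgen_apply)
    then show "(x i = i \<and> x (Suc i) = Suc i) \<or> x i = Suc i"
      using inj assms[of i] by (auto simp: sgen_apply inj_eq split: if_splits)
  next
    assume "(x i = i \<and> x (Suc i) = Suc i) \<or> x i = Suc i"
    then have "(x i = i \<and> x (Suc i) = Suc i) \<or> (x i = Suc i \<and> x (Suc i) = i)"
      using assms[of i] by auto
    then have "sgen i (x p) = x (sgen i p)" for p
      using assms[of p] by (auto simp: sgen_apply)
    then show "sgen i \<circ> x = x \<circ> sgen i" by auto
  qed
  then show ?thesis by (simp add: twist_def)
qed

lemma tact_involution:
  assumes "\<And>p. x (x p) = p"
  shows "tact i x (tact i x p) = p"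
proof (cases "sgen i \<circ> x = x \<circ> sgen i")
  case True
  then have "x (sgen i q) = sgen i (x q)" for q by (metis comp_apply)
  with True assms show ?thesis by (simp add: tact_def)
next
  case False
  with assms show ?thesis by (simp add: tact_def)
qed

lemma tact_in_Invol:
  assumes x: "x \<in> Invol n" and i: "i \<in> gens n"
  shows "tact i x \<in> Invol n"
proof -
  have xp: "x permutes {1..n}" by (rule InvolD(1)[OF x])
  have sp: "sgen i permutes {1..n}" by (rule sgen_permutes[OF i])
  have "twist i x permutes {1..n}"
    using sp by (simp add: twist_def permutes_id)
  then have "tact i x permutes {1..n}"
    unfolding tact_eq_comp_twist by (intro permutes_compose sp xp)
  moreover have "tact i x \<circ> tact i x = id"
    by (rule ext) (simp add: tact_involution[OF InvolD(2)[OF x]])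
  ultimately show ?thesis by (simp add: Invol_def Sym_def)
qed

lemma sgen_in_Invol: "i \<in> gens n \<Longrightarrow> sgen i \<in> Invol n"
  using tact_in_Invol[OF id_in_Invol] by (simp add: tact_id)

lemma tacts_in_Invol: "set ks \<subseteq> gens n \<Longrightarrow> x \<in> Invol n \<Longrightarrow> tacts ks x \<in> Invol n"
  by (induction ks) (auto simp: tacts_def tact_in_Invol)

lemma ascent_or_descent:
  assumes "x \<in> Invol n" and "i \<in> gens n"
  shows "x i < x (Suc i) \<or> x (Suc i) < x i"
proof -
  have "i \<in> {1..n}" "Suc i \<in> {1..n}" using assms(2) by (auto simp: gens_def)
  then have "x i \<noteq> x (Suc i)" using inj_on_eq_iff[OF InvolD(3)[OF assms(1)]] by force
  then show ?thesis by arith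
qed

lemma descent_of_tact:
  assumes "x \<in> Invol n" and "x (Suc i) < x i"
  shows "tact i x i < tact i x (Suc i)"
  using assms InvolD(2)[OF assms(1), of i] InvolD(2)[OF assms(1), of "Suc i"]
  by (auto simp: tact_eq_comp_twist twist_involution[OF InvolD(2)[OF assms(1)]] sgen_apply)

lemma permutes_ascending_eq_id:
  assumes x: "x permutes {1..n}" and up: "\<And>i. i \<in> gens n \<Longrightarrow> x i < x (Suc i)"
  shows "x = id"
proof -
  have box: "p \<in> {1..n} \<Longrightarrow> x p \<in> {1..n}" for p
    by (rule permutes_in_image[OF x, THEN iffD2])
  have lower: "1 \<le> k \<Longrightarrow> k \<le> n \<Longrightarrow> k \<le> x k" for k
  proof (induction k)
    case (Suc k)
    show ?case
    proof (cases "k = 0")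
      case True with box[of 1] Suc.prems show ?thesis by auto
    next
      case False
      then have "k \<in> gens n" using Suc.prems by (simp add: gens_def)
      with up[of k] Suc False show ?thesis by simp
    qed
  qed simp
  have upper: "d < n \<Longrightarrow> x (n - d) \<le> n - d" for d
  proof (induction d)
    case 0 with box[of n] show ?case by auto
  next
    case (Suc d)
    then have "n - Suc d \<in> gens n" "Suc (n - Suc d) = n - d" by (auto simp: gens_def)
    with up[of "n - Suc d"] Suc show ?case by simp
  qed
  have "x k = k" for k
  proof (cases "k \<in> {1..n}")
    case True
    with upper[of "n - k"] lower[of k] show ?thesis by simp
  next
    case False
    with permutes_not_in[OF x] show ?thesis by blast
  qed
  then show ?thesis by (simp add: fun_eq_iff)
qed

section \<open>The braid relation along ascents\<close>

lemma tact_braid: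
  assumes inv: "\<And>p. x (x p) = p" and adj: "b = Suc a \<or> a = Suc b"
    and asc1: "x a < x (Suc a)"
    and asc2: "tact a x b < tact a x (Suc b)"
    and asc3: "tact b (tact a x) a < tact b (tact a x) (Suc a)"
  shows "tact a (tact b (tact a x)) = tact b (tact a (tact b x))"
proof -
  define y1 y2 z1 z2 where "y1 = tact a x" and "y2 = tact b y1" and "z1 = tact b x" and "z2 = tact a z1"
  have inv_y1: "\<And>p. y1 (y1 p) = p" and inv_z1: "\<And>p. z1 (z1 p) = p"
    unfolding y1_def z1_def by (rule tact_involution[OF inv])+
  have inv_y2: "\<And>p. y2 (y2 p) = p" and inv_z2: "\<And>p. z2 (z2 p) = p"
    unfolding y2_def z2_def by (rule tact_involution[OF inv_y1], rule tact_involution[OF inv_z1])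
  have y1: "y1 q = sgen a (x (twist a x q))"
    and y2: "y2 q = sgen b (y1 (twist b y1 q))"
    and z1: "z1 q = sgen b (x (twist b x q))"
    and z2: "z2 q = sgen a (z1 (twist a z1 q))" for q
    by (simp_all add: y1_def y2_def z1_def z2_def tact_eq_comp_twist)
  have twist_apply: "twist i f q = (if (f i = i \<and> f (Suc i) = Suc i) \<or> f i = Suc i then q else sgen i q)"
    if "\<And>p. f (f p) = p" for i f q
    using twist_involution[OF that] by simp
  note twists = twist_apply[OF inv] twist_apply[OF inv_y1] twist_apply[OF inv_y2]
    twist_apply[OF inv_z1] twist_apply[OF inv_z2]
  text \<open>Both sides are the braid \<open>s\<^sub>a s\<^sub>b s\<^sub>a\<close> times \<open>x\<close> times a product of twists; the twists are
    decided by the values of \<open>x\<close> at \<open>c, c+1, c+2\<close>, \<open>c = min a b\<close>.\<close>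
  have twists_eq: "twist a x \<circ> twist b y1 \<circ> twist a y2 = twist b x \<circ> twist a z1 \<circ> twist b z2"
  proof (rule ext)
    fix q
    have asc: "y1 b < y1 (Suc b)" "y2 a < y2 (Suc a)"
      using asc2 asc3 by (simp_all add: y1_def y2_def)
    have value_cases: "x p = c \<or> x p = Suc c \<or> x p = Suc (Suc c) \<or>
        (x p \<noteq> c \<and> x p \<noteq> Suc c \<and> x p \<noteq> Suc (Suc c))" for p c :: nat
      by auto
    from adj consider "b = Suc a" | "a = Suc b" by blast
    then show "(twist a x \<circ> twist b y1 \<circ> twist a y2) q = (twist b x \<circ> twist a z1 \<circ> twist b z2) q"
    proof cases
      case 1
      with asc asc1 inv inv[of a] inv[of "Suc a"] inv[of "Suc (Suc a)"]
        value_cases[of a a] value_cases[of "Suc a" a] value_cases[of "Suc (Suc a)" a]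
      show ?thesis
        by (elim disjE conjE) (simp_all add: twists sgen_apply y1 y2 z1 z2)
    next
      case 2
      with asc asc1 inv inv[of b] inv[of "Suc b"] inv[of "Suc (Suc b)"]
        value_cases[of b b] value_cases[of "Suc b" b] value_cases[of "Suc (Suc b)" b]
      show ?thesis
        by (elim disjE conjE) (simp_all add: twists sgen_apply y1 y2 z1 z2)
    qed
  qed
  have lhs: "tact a y2 = (sgen a \<circ> sgen b \<circ> sgen a) \<circ> x \<circ> (twist a x \<circ> twist b y1 \<circ> twist a y2)"
    by (rule ext) (simp add: tact_eq_comp_twist y1 y2)
  have rhs: "tact b z2 = (sgen b \<circ> sgen a \<circ> sgen b) \<circ> x \<circ> (twist b x \<circ> twist a z1 \<circ> twist b z2)"
    by (rule ext) (simp add: tact_eq_comp_twist z1 z2)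
  show ?thesis
    unfolding y1_def[symmetric] y2_def[symmetric] z1_def[symmetric] z2_def[symmetric] lhs rhs
    using sgen_braid[OF adj] twists_eq by simp
qed

section \<open>Inversions and excedances\<close>

definition inversions :: "nat \<Rightarrow> (nat \<Rightarrow> nat) \<Rightarrow> (nat \<times> nat) set" where
  "inversions n x = {(p, q). p \<in> {1..n} \<and> q \<in> {1..n} \<and> p < q \<and> x q < x p}"

definition excedances :: "nat \<Rightarrow> (nat \<Rightarrow> nat) \<Rightarrow> nat set" where
  "excedances n x = {p \<in> {1..n}. p < x p}"

definition inv_exc :: "nat \<Rightarrow> (nat \<Rightarrow> nat) \<Rightarrow> nat" where
  "inv_exc n x = card (inversions n x) + card (excedances n x)"

lemma finite_inversions: "finite (inversions n x)"
  by (rule finite_subset[of _ "{1..n} \<times> {1..n}"]) (auto simp: inversions_def)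

lemma finite_excedances: "finite (excedances n x)"
  by (simp add: excedances_def)

lemma inv_exc_id: "inv_exc n id = 0"
proof -
  have "inversions n id = {}" "excedances n id = {}"
    by (auto simp: inversions_def excedances_def)
  then show ?thesis by (simp add: inv_exc_def)
qed

lemma card_inversions_sgen_comp:
  assumes inj: "inj_on x {1..n}" and u: "u \<in> {1..n}" and v: "v \<in> {1..n}" and "u < v"
    and xu: "x u = i" and xv: "x v = Suc i"
  shows "card (inversions n (sgen i \<circ> x)) = card (inversions n x) + 1"
proof -
  have "sgen i (x q) < sgen i (x p) \<longleftrightarrow> x q < x p \<or> (p = u \<and> q = v)"
    if "p \<in> {1..n}" "q \<in> {1..n}" "p < q" for p q
  proof -
    have "x q \<noteq> x p" using inj that by (metis inj_on_eq_iff less_irrefl)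
    moreover have "x q = i \<and> x p = Suc i \<longleftrightarrow> q = u \<and> p = v"
      and "x q = Suc i \<and> x p = i \<longleftrightarrow> q = v \<and> p = u"
      using inj that u v xu xv by (metis inj_on_eq_iff n_not_Suc_n)+
    ultimately show ?thesis using sgen_less_sgen_iff[of "x q" "x p" i] that \<open>u < v\<close> by auto
  qed
  then have "inversions n (sgen i \<circ> x) = insert (u, v) (inversions n x)"
    using u v \<open>u < v\<close> by (auto simp: inversions_def)
  moreover have "(u, v) \<notin> inversions n x"
    using xu xv by (auto simp: inversions_def)
  ultimately show ?thesis using finite_inversions by simp
qed

lemma card_inversions_comp_sgen:
  assumes i: "i \<in> gens n" and asc: "x i < x (Suc i)"
  shows "card (inversions n (x \<circ> sgen i)) = card (inversions n x) + 1"
proof -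
  define \<phi> where "\<phi> = (\<lambda>(p, q). (sgen i p, sgen i q))"
  have inj: "inj_on \<phi> A" for A
    by (rule inj_onI) (auto simp: \<phi>_def split: prod.splits dest: inj_sgen[THEN inj_onD])
  have lt: "p < q \<Longrightarrow> \<not> (p = i \<and> q = Suc i) \<Longrightarrow> sgen i p < sgen i q" for p q
    by (auto simp: sgen_apply)
  note box = sgen_in_box_iff[OF i]
  have "inversions n (x \<circ> sgen i) = insert (i, Suc i) (\<phi> ` inversions n x)"
  proof (rule set_eqI, rule iffI)
    fix z assume z: "z \<in> inversions n (x \<circ> sgen i)"
    obtain p q where pq: "z = (p, q)" by force
    show "z \<in> insert (i, Suc i) (\<phi> ` inversions n x)"
    proof (cases "p = i \<and> q = Suc i")
      case False
      then have "(sgen i p, sgen i q) \<in> inversions n x"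
        using z pq lt box by (auto simp: inversions_def)
      moreover have "z = \<phi> (sgen i p, sgen i q)" using pq by (simp add: \<phi>_def)
      ultimately show ?thesis by blast
    qed (use pq in simp)
  next
    fix z assume z: "z \<in> insert (i, Suc i) (\<phi> ` inversions n x)"
    show "z \<in> inversions n (x \<circ> sgen i)"
    proof (cases "z = (i, Suc i)")
      case True with i asc show ?thesis by (auto simp: inversions_def sgen_apply gens_def)
    next
      case False
      then obtain p q where pq: "(p, q) \<in> inversions n x" and zz: "z = (sgen i p, sgen i q)"
        using z by (auto simp: \<phi>_def)
      then have "\<not> (p = i \<and> q = Suc i)" using asc by (auto simp: inversions_def)
      with pq zz lt box show ?thesis by (auto simp: inversions_def)
    qed
  qed
  moreover have "(i, Suc i) \<notin> \<phi> ` inversions n x"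
    by (auto simp: \<phi>_def inversions_def sgen_apply split: if_splits)
  ultimately show ?thesis using finite_inversions card_image[OF inj] by simp
qed

lemma card_excedances_sgen_comp:
  assumes inj: "inj_on x {1..n}" and i: "i \<in> gens n" and fixed: "x i = i" "x (Suc i) = Suc i"
  shows "card (excedances n (sgen i \<circ> x)) = card (excedances n x) + 1"
proof -
  have ib: "i \<in> {1..n}" "Suc i \<in> {1..n}" using i by (auto simp: gens_def)
  have "p < sgen i (x p) \<longleftrightarrow> p = i \<or> p < x p" if p: "p \<in> {1..n}" for p
  proof (cases "p = i \<or> p = Suc i")
    case False
    then have "x p \<noteq> x i" "x p \<noteq> x (Suc i)"
      using inj_on_eq_iff[OF inj p ib(1)] inj_on_eq_iff[OF inj p ib(2)] by blast+
    with False fixed show ?thesis by (simp add: sgen_apply)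
  qed (use fixed in \<open>auto simp: sgen_apply\<close>)
  then have "excedances n (sgen i \<circ> x) = insert i (excedances n x)"
    using ib unfolding excedances_def by auto
  moreover have "i \<notin> excedances n x" using fixed by (simp add: excedances_def)
  ultimately show ?thesis using finite_excedances by simp
qed

lemma card_excedances_conj_sgen:
  assumes inv: "\<And>p. x (x p) = p" and i: "i \<in> gens n" and asc: "x i < x (Suc i)"
  shows "card (excedances n (sgen i \<circ> x \<circ> sgen i)) = card (excedances n x)"
proof -
  have "sgen i p < sgen i (x p) \<longleftrightarrow> p < x p" for p
  proof (cases "x p = p")
    case False
    have "\<not> (p = i \<and> x p = Suc i)" "\<not> (p = Suc i \<and> x p = i)"
      using asc inv[of i] inv[of "Suc i"] by auto
    with sgen_less_sgen_iff[of p "x p" i] False show ?thesis by auto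
  qed simp
  from this[of "sgen i p" for p]
  have "p \<in> excedances n (sgen i \<circ> x \<circ> sgen i) \<longleftrightarrow> p \<in> sgen i ` excedances n x" for p
    using sgen_in_box_iff[OF i, of p] by (simp add: excedances_def mem_sgen_image_iff) blast
  then have "excedances n (sgen i \<circ> x \<circ> sgen i) = sgen i ` excedances n x"
    by blast
  then show ?thesis by (simp add: card_image inj_sgen)
qed

lemma inv_exc_tact_ascent:
  assumes x: "x \<in> Invol n" and i: "i \<in> gens n" and asc: "x i < x (Suc i)"
  shows "inv_exc n (tact i x) = inv_exc n x + 2"
proof -
  note inv = InvolD(2)[OF x] and inj = InvolD(3)[OF x] and box = InvolD(4)[OF x]
  have ib: "i \<in> {1..n}" "Suc i \<in> {1..n}" using i by (auto simp: gens_def)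
  show ?thesis
  proof (cases "x i = i \<and> x (Suc i) = Suc i")
    case True
    then have "tact i x = sgen i \<circ> x"
      by (simp add: tact_eq_comp_twist twist_involution[OF inv])
    moreover have "card (inversions n (sgen i \<circ> x)) = card (inversions n x) + 1"
      by (rule card_inversions_sgen_comp[OF inj ib]) (use True in simp_all)
    moreover have "card (excedances n (sgen i \<circ> x)) = card (excedances n x) + 1"
      using True by (intro card_excedances_sgen_comp[OF inj i]) simp_all
    ultimately show ?thesis by (simp add: inv_exc_def)
  next
    case False
    have "x i \<noteq> Suc i" using asc inv[of i] by auto
    with False have "twist i x = sgen i"
      unfolding twist_involution[OF inv] by (intro if_not_P) blast
    then have tact: "tact i x = sgen i \<circ> (x \<circ> sgen i)"
      by (simp add: tact_eq_comp_twist comp_assoc)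
    have "sgen i ` {1..n} \<subseteq> {1..n}"
      using sgen_in_box_iff[OF i] by blast
    then have inj': "inj_on (x \<circ> sgen i) {1..n}"
      by (intro comp_inj_on inj_sgen inj_on_subset[OF inj])
    have "sgen i (x i) \<in> {1..n}" "sgen i (x (Suc i)) \<in> {1..n}"
      using box[OF ib(1)] box[OF ib(2)] sgen_in_box_iff[OF i] by blast+
    moreover have "sgen i (x i) < sgen i (x (Suc i))"
      using asc False sgen_less_sgen_iff[of "x i" "x (Suc i)" i] by auto
    ultimately have "card (inversions n (sgen i \<circ> (x \<circ> sgen i))) = card (inversions n (x \<circ> sgen i)) + 1"
      by (rule card_inversions_sgen_comp[OF inj']) (simp_all add: inv)
    moreover have "card (inversions n (x \<circ> sgen i)) = card (inversions n x) + 1"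
      by (rule card_inversions_comp_sgen[OF i asc])
    moreover have "card (excedances n (sgen i \<circ> x \<circ> sgen i)) = card (excedances n x)"
      by (rule card_excedances_conj_sgen[OF inv i asc])
    ultimately show ?thesis by (simp add: tact inv_exc_def comp_assoc)
  qed
qed

lemma inv_exc_tact_descent:
  assumes x: "x \<in> Invol n" and i: "i \<in> gens n" and desc: "x (Suc i) < x i"
  shows "inv_exc n x = inv_exc n (tact i x) + 2"
  using inv_exc_tact_ascent[OF tact_in_Invol[OF x i] i descent_of_tact[OF x desc]] by simp

lemma inv_exc_tact_le: "x \<in> Invol n \<Longrightarrow> i \<in> gens n \<Longrightarrow> inv_exc n (tact i x) \<le> inv_exc n x + 2"
  using ascent_or_descent inv_exc_tact_ascent inv_exc_tact_descent by fastforce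

lemma inv_exc_tacts_le:
  "set ks \<subseteq> gens n \<Longrightarrow> x \<in> Invol n \<Longrightarrow> inv_exc n (tacts ks x) \<le> inv_exc n x + 2 * length ks"
proof (induction ks)
  case (Cons i ks)
  then have "inv_exc n (tact i (tacts ks x)) \<le> inv_exc n (tacts ks x) + 2"
    by (intro inv_exc_tact_le tacts_in_Invol) auto
  with Cons show ?case by (simp add: tacts_def)
qed (simp add: tacts_def)

lemma exists_tacts_word_half_inv_exc:
  assumes "x \<in> Invol n"
  shows "\<exists>ks. set ks \<subseteq> gens n \<and> tacts ks id = x \<and> 2 * length ks = inv_exc n x"
  using assms
proof (induction "inv_exc n x" arbitrary: x rule: less_induct)
  case less
  show ?case
  proof (cases "x = id")
    case True then show ?thesis by (intro exI[of _ "[]"]) (simp add: tacts_def inv_exc_id)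
  next
    case False
    then obtain i where i: "i \<in> gens n" and desc: "x (Suc i) < x i"
      using permutes_ascending_eq_id[OF InvolD(1)[OF less.prems]] ascent_or_descent[OF less.prems]
      by blast
    have y: "tact i x \<in> Invol n" by (rule tact_in_Invol[OF less.prems i])
    have N: "inv_exc n x = inv_exc n (tact i x) + 2" by (rule inv_exc_tact_descent[OF less.prems i desc])
    then obtain ks where "set ks \<subseteq> gens n" "tacts ks id = tact i x" "2 * length ks = inv_exc n (tact i x)"
      using less.hyps[OF _ y] by auto
    with i N show ?thesis by (intro exI[of _ "i # ks"]) (simp add: tacts_def)
  qed
qed

section \<open>The length function \<open>\<rho>\<close>\<close>

lemma double_rho_eq_inv_exc:
  assumes x: "x \<in> Invol n"
  shows "2 * rho n x = inv_exc n x"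
proof -
  obtain ks where ks: "set ks \<subseteq> gens n" "tacts ks id = x" "2 * length ks = inv_exc n x"
    using exists_tacts_word_half_inv_exc[OF x] by blast
  have "rho n x = length ks"
    unfolding rho_def
  proof (rule Least_equality)
    fix m assume "\<exists>js. length js = m \<and> set js \<subseteq> gens n \<and> tacts js id = x"
    then obtain js where "length js = m" "set js \<subseteq> gens n" "tacts js id = x" by blast
    with inv_exc_tacts_le[of js n id] ks(3) show "length ks \<le> m"
      by (simp add: inv_exc_id id_in_Invol)
  qed (use ks in blast)
  with ks(3) show ?thesis by simp
qed

lemma rho_sgen:
  assumes "i \<in> gens n"
  shows "rho n (sgen i) = 1"
  using double_rho_eq_inv_exc[OF sgen_in_Invol[OF assms]] inv_exc_tact_ascent[OF id_in_Invol assms]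
  by (simp add: tact_id inv_exc_id)

lemma rho_tact_ascent_iff:
  assumes x: "x \<in> Invol n" and i: "i \<in> gens n"
  shows "rho n (tact i x) = rho n x + 1 \<longleftrightarrow> x i < x (Suc i)"
proof -
  note N = double_rho_eq_inv_exc[OF x] double_rho_eq_inv_exc[OF tact_in_Invol[OF x i]]
  show ?thesis
  proof (cases "x i < x (Suc i)")
    case True
    with N inv_exc_tact_ascent[OF x i] show ?thesis by simp
  next
    case False
    with ascent_or_descent[OF x i] have "x (Suc i) < x i" by blast
    with N inv_exc_tact_descent[OF x i] False show ?thesis by simp
  qed
qed

lemma rho_tacts_le:
  assumes "set ks \<subseteq> gens n" and "x \<in> Invol n"
  shows "rho n (tacts ks x) \<le> rho n x + length ks"
  using double_rho_eq_inv_exc[OF assms(2)] double_rho_eq_inv_exc[OF tacts_in_Invol[OF assms]]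
    inv_exc_tacts_le[OF assms] by simp

lemma reduced_Cons:
  assumes "reduced n (i # ks) w"
  shows "reduced n ks w" and "tacts ks w i < tacts ks w (Suc i)"
proof -
  have w: "w \<in> Invol n" and i: "i \<in> gens n" and ks: "set ks \<subseteq> gens n"
    and rho: "rho n (tact i (tacts ks w)) = rho n w + length ks + 1"
    using assms by (auto simp: reduced_def tacts_def)
  have x: "tacts ks w \<in> Invol n" by (rule tacts_in_Invol[OF ks w])
  have "rho n (tact i (tacts ks w)) \<le> rho n (tacts ks w) + 1"
    using rho_tacts_le[OF _ x, of "[i]"] i by (simp add: tacts_def)
  with rho rho_tacts_le[OF ks w] have "rho n (tacts ks w) = rho n w + length ks"
    and "rho n (tact i (tacts ks w)) = rho n (tacts ks w) + 1" by linarith+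
  then show "reduced n ks w" and "tacts ks w i < tacts ks w (Suc i)"
    using w ks rho_tact_ascent_iff[OF x i] by (simp_all add: reduced_def)
qed

lemma reduced_append: "reduced n (ks @ js) w \<Longrightarrow> reduced n js w"
  by (induction ks) (auto dest: reduced_Cons(1))

lemma reduced_transfer:
  assumes "reduced n ks w" and "tacts ks w = tacts js v" and "length js = length ks"
    and "set js \<subseteq> gens n" and "v \<in> Invol n" and "rho n v = rho n w"
  shows "reduced n js v"
  using assms by (simp add: reduced_def)

theorem lemma2p13:
  fixes n :: nat and w :: "nat \<Rightarrow> nat" and pre :: "nat list" and a b j :: nat
  shows
  "(reduced n (pre @ [a, b]) w \<and> (a > b + 1 \<or> b > a + 1) \<longrightarrow>
      reduced n (pre @ [b, a]) w \<and> tacts (pre @ [a, b]) w = tacts (pre @ [b, a]) w)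
   \<and> (reduced n (pre @ [a, b, a]) w \<and> (b = a + 1 \<or> a = b + 1) \<longrightarrow>
      reduced n (pre @ [b, a, b]) w \<and> tacts (pre @ [a, b, a]) w = tacts (pre @ [b, a, b]) w)
   \<and> (reduced n (pre @ [a]) w \<and> j \<in> gens n \<and> (j = a + 1 \<or> a = j + 1) \<and> w = sgen j \<longrightarrow>
      reduced n (pre @ [j]) (sgen a) \<and> tacts (pre @ [a]) (sgen j) = tacts (pre @ [j]) (sgen a))"
proof (intro conjI impI; (elim conjE)?)
  assume red: "reduced n (pre @ [a, b]) w" and far: "a > b + 1 \<or> b > a + 1"
  show eq: "tacts (pre @ [a, b]) w = tacts (pre @ [b, a]) w"
    using tact_commute[OF far] by (simp add: tacts_def)
  show "reduced n (pre @ [b, a]) w"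
    by (rule reduced_transfer[OF red eq]) (use red in \<open>auto simp: reduced_def\<close>)
next
  assume red: "reduced n (pre @ [a, b, a]) w" and adj: "b = a + 1 \<or> a = b + 1"
  have w: "w \<in> Invol n" using red by (simp add: reduced_def)
  from red have "reduced n [a, b, a] w" by (rule reduced_append)
  then have r2: "reduced n [b, a] w" and asc3: "tacts [b, a] w a < tacts [b, a] w (Suc a)"
    by (rule reduced_Cons)+
  from r2 have r1: "reduced n [a] w" and asc2: "tacts [a] w b < tacts [a] w (Suc b)"
    by (rule reduced_Cons)+
  from r1 have asc1: "tacts [] w a < tacts [] w (Suc a)"
    by (rule reduced_Cons)
  have "tact a (tact b (tact a w)) = tact b (tact a (tact b w))"
    by (rule tact_braid[OF InvolD(2)[OF w]]) (use adj asc1 asc2 asc3 in \<open>simp_all add: tacts_def\<close>)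
  then show eq: "tacts (pre @ [a, b, a]) w = tacts (pre @ [b, a, b]) w"
    by (simp add: tacts_def)
  show "reduced n (pre @ [b, a, b]) w"
    by (rule reduced_transfer[OF red eq]) (use red in \<open>auto simp: reduced_def\<close>)
next
  assume red: "reduced n (pre @ [a]) w" and j: "j \<in> gens n"
    and adj: "j = a + 1 \<or> a = j + 1" and w: "w = sgen j"
  have a: "a \<in> gens n" using red by (simp add: reduced_def)
  have "tact a (sgen j) = sgen a \<circ> sgen j \<circ> sgen a" "tact j (sgen a) = sgen j \<circ> sgen a \<circ> sgen j"
    using adj by (auto intro: tact_sgen_adjacent)
  with adj have "tact a (sgen j) = tact j (sgen a)"
    using sgen_braid[of j a] by simp
  then show eq: "tacts (pre @ [a]) (sgen j) = tacts (pre @ [j]) (sgen a)"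
    by (simp add: tacts_def)
  have "rho n (sgen a) = rho n (sgen j)"
    using rho_sgen[OF a] rho_sgen[OF j] by simp
  with red w j show "reduced n (pre @ [j]) (sgen a)"
    by (intro reduced_transfer[OF _ eq]) (auto simp: reduced_def sgen_in_Invol[OF a])
qed

end
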